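(* Let $f$ be a unimodal probability density on $\mathbb{R}$ symmetric about $0$ with $f(0)=M<\infty$ and $\int_0^\infty x f(x)\,dx<\infty$, and let $G$ be an absolutely continuous cumulative distribution function on $\mathbb{R}$ symmetric about $0$ whose density $g$ is bounded and satisfies $\int_0^\infty x\,g(x)\,dx<\infty$. Let $$M_{TV}(\lambda)=\operatorname{sign}(\lambda)\,\frac12\int_{\mathbb{R}}\bigl|2G(\lambda x)-1\bigr|\,f(x)\,dx,\qquad \lambda\in\mathbb{R},$$ and for $\alpha,\beta>0$ let $$\pi_{TV}(\lambda\mid\alpha,\beta)=\frac{1}{B(\alpha,\beta)}\Bigl(M_{TV}(\lambda)+\tfrac12\Bigr)^{\alpha-1}\Bigl(\tfrac12-M_{TV}(\lambda)\Bigr)^{\beta-1}\frac{d}{d\lambda}M_{TV}(\lambda).$$ Then the right tail of $\pi_{TV}(\lambda\mid\alpha,\beta)$ (as $\lambda\to+\infty$) is of order $O(|\lambda|^{-\beta-1})$ and its left tail (as $\lambda\to-\infty$) is of order $O(|\lambda|^{-\alpha-1})$. Moreover, if $\alpha=\beta$, then $\pi_{TV}(\lambda\mid\alpha,\beta)$ is symmetric about $0$.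
   Context: $\pi_{TV}(\lambda\mid\alpha,\beta)$ is the $BTV(\alpha,\beta)$ prior: the density of $\lambda$ induced by putting a Beta$(\alpha,\beta)$ distribution, rescaled to $(-1/2,1/2)$, on $M_{TV}(\lambda)$, for the skew-symmetric model $\frac{2}{\sigma}f\left(\frac{x-\mu}{\sigma}\right)G\left(\lambda\frac{x-\mu}{\sigma}\right)$ (i.e. with $\omega(x)=x$). $B(\alpha,\beta)$ is the Beta function. *)

theory Defs
  imports "HOL-Analysis.Analysis" "HOL-Library.Landau_Symbols"
begin

definition M_TV :: "(real \<Rightarrow> real) \<Rightarrow> (real \<Rightarrow> real) \<Rightarrow> real \<Rightarrow> real" where
  "M_TV f G lam = sgn lam * (1/2) * (LINT x|lborel. \<bar>2 * G (lam * x) - 1\<bar> * f x)"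

definition pi_TV :: "(real \<Rightarrow> real) \<Rightarrow> (real \<Rightarrow> real) \<Rightarrow> real \<Rightarrow> real \<Rightarrow> real \<Rightarrow> real" where
  "pi_TV f G a b lam = (1 / Beta a b) * (M_TV f G lam + 1/2) powr (a - 1)
      * (1/2 - M_TV f G lam) powr (b - 1) * deriv (M_TV f G) lam"

end

theory Submission
  imports Defs
begin

text \<open>For \<open>\<lambda> > 0\<close>, Fubini gives \<open>1/2 - M_TV(\<lambda>) = 2 \<Phi>(\<lambda>)\<close> with
  \<open>\<Phi>(\<lambda>) = \<integral> g(t) F(t/\<lambda>) dt\<close> and \<open>F(s) = \<integral>\<^sub>0\<^sup>s f\<close>. Since \<open>F(s)\<close> lies between
  \<open>f(a) min(s, a)\<close> and \<open>f(0) s\<close>, \<open>\<Phi>(\<lambda>)\<close> is of exact order \<open>1/\<lambda>\<close>; differentiating under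
  the integral sign, with the first moment of \<open>g\<close> as dominating function, gives
  \<open>M_TV'(\<lambda>) = O(\<lambda>^-2)\<close>. So in \<open>\<pi>_TV\<close> the factor \<open>(1/2 - M_TV)^(\<beta>-1)\<close> is
  \<open>O(\<lambda>^(1-\<beta>))\<close>, the factor \<open>(M_TV + 1/2)^(\<alpha>-1)\<close> stays bounded, and the right tail is
  \<open>O(\<lambda>^(-\<beta>-1))\<close>. Symmetry of \<open>G\<close> makes \<open>M_TV\<close> odd, hence
  \<open>\<pi>_TV(-\<lambda> | \<alpha>, \<beta>) = \<pi>_TV(\<lambda> | \<beta>, \<alpha>)\<close>, which gives the left tail and the symmetry for
  \<open>\<alpha> = \<beta>\<close>.\<close>

lemma integral_dominated_convergence_at:
  fixes s :: "real \<Rightarrow> 'a \<Rightarrow> 'b::{banach, second_countable_topology}" and w :: "'a \<Rightarrow> real"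
  assumes "f \<in> borel_measurable M" "\<And>h. s h \<in> borel_measurable M" "integrable M w"
    and lim: "AE t in M. ((\<lambda>h. s h t) \<longlongrightarrow> f t) (at x)"
    and bound: "\<forall>\<^sub>F h in at x. AE t in M. norm (s h t) \<le> w t"
  shows "((\<lambda>h. integral\<^sup>L M (s h)) \<longlongrightarrow> integral\<^sup>L M f) (at x)"
  unfolding tendsto_at_iff_sequentially comp_def
proof (intro allI impI)
  fix X :: "nat \<Rightarrow> real" assume "\<forall>i. X i \<in> UNIV - {x}" and "X \<longlonglongrightarrow> x"
  then have X: "filterlim X (at x) sequentially"
    by (auto simp: filterlim_at)
  from filterlim_iff[THEN iffD1, OF X, rule_format, OF bound]
  obtain N where w: "\<And>n. N \<le> n \<Longrightarrow> AE t in M. norm (s (X n) t) \<le> w t"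
    by (auto simp: eventually_sequentially)
  show "(\<lambda>n. integral\<^sup>L M (s (X n))) \<longlonglongrightarrow> integral\<^sup>L M f"
  proof (rule LIMSEQ_offset, rule integral_dominated_convergence)
    show "AE t in M. norm (s (X (n + N)) t) \<le> w t" for n
      by (rule w) auto
    show "AE t in M. (\<lambda>n. s (X (n + N)) t) \<longlonglongrightarrow> f t"
      using lim
    proof eventually_elim
      fix t assume "((\<lambda>h. s h t) \<longlongrightarrow> f t) (at x)"
      then show "(\<lambda>n. s (X (n + N)) t) \<longlonglongrightarrow> f t"
        by (intro LIMSEQ_ignore_initial_segment filterlim_compose[OF _ X])
    qed
  qed (use assms in auto)
qed

lemma powr_le_one_plus_half_powr:
  fixes y e :: real
  assumes "1/2 \<le> y" "y \<le> 1"
  shows "y powr e \<le> 1 + (1/2) powr e"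
proof (cases "e \<ge> 0")
  case True
  then have "y powr e \<le> 1 powr e" using assms by (intro powr_mono2) auto
  then have "y powr e \<le> 1" by simp
  moreover have "0 \<le> (1/2 :: real) powr e" by simp
  ultimately show ?thesis by linarith
next
  case False
  then have "y powr e \<le> (1/2) powr e" using assms by (intro powr_mono2') auto
  then show ?thesis by simp
qed

lemma powr_le_of_inverse_bounds:
  fixes x L U c e :: real
  assumes L: "0 < L" and c: "0 < c" and lo: "L / c \<le> x" and hi: "x \<le> U / c"
  shows "x powr e \<le> (L powr e + U powr e) * c powr (- e)"
proof -
  have x: "x > 0" using divide_pos_pos[OF L c] lo by linarith
  have scale: "(z / c) powr e = z powr e * c powr (- e)" for z
    by (simp add: powr_divide powr_minus_divide)
  have "x powr e \<le> (if e \<ge> 0 then U / c else L / c) powr e"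
    using x L c lo hi by (auto intro: powr_mono2 powr_mono2')
  also have "\<dots> \<le> (L powr e + U powr e) * c powr (- e)"
    by (simp add: scale mult_right_mono)
  finally show ?thesis .
qed

lemma min_max_divide_le:
  fixes a c t :: real
  assumes "c \<ge> 1" "a > 0"
  shows "min (max t 0) a / c \<le> min (max (t / c) 0) a"
proof (cases "t \<le> 0")
  case True
  then show ?thesis using assms by (simp add: max_def divide_le_0_iff)
next
  case False
  have "min t a / c \<le> a / c" "a / c \<le> a" "min t a / c \<le> t / c"
    using assms by (simp_all add: divide_right_mono divide_le_eq)
  then show ?thesis using False assms by (simp add: max_def)
qed

subsection \<open>Reflection\<close>

lemma deriv_odd_function:
  fixes h :: "real \<Rightarrow> real"
  assumes odd: "\<And>x. h (- x) = - h x"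
  shows "deriv h (- c) = deriv h c"
proof -
  have "(h has_real_derivative D) (at (- c)) \<longleftrightarrow> (h has_real_derivative D) (at c)" for D
  proof -
    have "(h has_real_derivative D) (at (- c)) \<longleftrightarrow> ((\<lambda>x. h (- x)) has_real_derivative - D) (at c)"
      by (rule DERIV_mirror)
    also have "\<dots> \<longleftrightarrow> ((\<lambda>x. - h (- x)) has_real_derivative D) (at c)"
      using DERIV_minus[of "\<lambda>x. h (- x)" "- D" c UNIV] DERIV_minus[of "\<lambda>x. - h (- x)" D c UNIV]
      by auto
    also have "(\<lambda>x. - h (- x)) = h" using odd by (simp add: fun_eq_iff)
    finally show ?thesis .
  qed
  then show ?thesis unfolding deriv_def by simp
qed

lemma M_TV_minus:
  assumes G_symm: "\<And>x. G (- x) = 1 - G x"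
  shows "M_TV f G (- c) = - M_TV f G c"
proof -
  have "\<bar>2 * G (- c * x) - 1\<bar> = \<bar>2 * G (c * x) - 1\<bar>" for x
    using G_symm[of "c * x"] by simp
  then show ?thesis unfolding M_TV_def by (simp add: sgn_minus)
qed

lemma pi_TV_minus:
  assumes "\<And>x. G (- x) = 1 - G x"
  shows "pi_TV f G a b (- c) = pi_TV f G b a c"
proof -
  have odd: "M_TV f G (- x) = - M_TV f G x" for x
    using M_TV_minus assms .
  show ?thesis
    unfolding pi_TV_def odd deriv_odd_function[of "M_TV f G", OF odd]
    by (simp add: Beta_commute algebra_simps)
qed

locale symmetric_unimodal_density =
  fixes f :: "real \<Rightarrow> real"
  assumes f_nonneg: "\<And>x. f x \<ge> 0"
    and f_integrable: "integrable lborel f"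
    and f_prob: "(LINT x|lborel. f x) = 1"
    and f_symm: "\<And>x. f (- x) = f x"
    and f_antimono: "antimono_on {0..} f"
    and f_mono: "mono_on {..0} f"
begin

lemma f_le_f0: "f x \<le> f 0"
  using f_antimono f_mono by (cases "x \<ge> 0") (auto simp: monotone_on_def)

lemma f_measurable[measurable]: "f \<in> borel_measurable borel"
  using f_integrable by (simp add: borel_measurable_integrable)

lemma f_set_integrable: "A \<in> sets borel \<Longrightarrow> set_integrable lborel A f"
  unfolding set_integrable_def using f_integrable by (intro integrable_mult_indicator) auto

lemma f_integrable_on: "f integrable_on {a..b}"
  using f_set_integrable[of "{a..b}"] by (auto intro: set_borel_integral_eq_integral(1))

lemma f_pos_somewhere: "\<exists>a>0. f a > 0"
proof (rule ccontr)
  assume "\<not> ?thesis"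
  then have pos: "f x = 0" if "x > 0" for x
    using f_nonneg[of x] that by force
  have "f x = 0" if "x \<noteq> 0" for x
    using pos[of x] pos[of "- x"] f_symm[of x] that by (cases "x > 0") auto
  moreover have "AE x in lborel. x \<notin> {0}" by (intro AE_not_in countable_imp_null_set_lborel) auto
  ultimately have "AE x in lborel. f x = 0" by (auto elim!: eventually_mono)
  then have "(LINT x|lborel. f x) = 0" by (rule integral_eq_zero_AE)
  then show False using f_prob by simp
qed

lemma countable_discontinuities: "countable {s\<in>{0<..}. \<not> isCont f s}"
proof -
  have "mono_on {0<..} (\<lambda>x. - f x)"
    using f_antimono by (auto simp: monotone_on_def)
  then have "countable {s\<in>{0<..}. \<not> isCont (\<lambda>x. - f x) s}"
    by (intro mono_on_ctble_discont_open) auto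
  moreover have "isCont f s" if "isCont (\<lambda>x. - f x) s" for s
    using isCont_minus[OF that] by simp
  ultimately show ?thesis by (auto elim!: countable_subset[rotated])
qed

lemma integral_interval_bounds:
  "v \<le> u \<Longrightarrow> 0 \<le> integral {v..u} f \<and> integral {v..u} f \<le> f 0 * (u - v)"
proof
  assume "v \<le> u"
  show "0 \<le> integral {v..u} f" using f_nonneg f_integrable_on by (intro integral_nonneg) auto
  have "integral {v..u} f \<le> integral {v..u} (\<lambda>x. f 0)"
    using f_le_f0 f_integrable_on by (intro integral_le) auto
  then show "integral {v..u} f \<le> f 0 * (u - v)" using \<open>v \<le> u\<close> by (simp add: mult.commute)
qed

definition central_mass :: "real \<Rightarrow> real" where
  "central_mass s = integral {0..s} f"

lemma central_mass_nonpos: "s \<le> 0 \<Longrightarrow> central_mass s = 0"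
  unfolding central_mass_def by (cases "s = 0") auto

lemma central_mass_bounds: "0 \<le> central_mass s \<and> central_mass s \<le> f 0 * max s 0"
  using integral_interval_bounds[of 0 s] central_mass_nonpos[of s]
  by (cases "s \<le> 0") (auto simp: central_mass_def)

lemma central_mass_increment:
  assumes "a \<le> b"
  shows "0 \<le> central_mass b - central_mass a \<and> central_mass b - central_mass a \<le> f 0 * (b - a)"
proof (cases "a \<le> 0")
  case True
  then have "f 0 * max b 0 \<le> f 0 * (b - a)"
    using assms f_nonneg[of 0] by (intro mult_left_mono) auto
  then show ?thesis using central_mass_bounds[of b] True by (simp add: central_mass_nonpos)
next
  case False
  then have "central_mass b - central_mass a = integral {a..b} f"
    using assms Henstock_Kurzweil_Integration.integral_combine[of 0 a b f] f_integrable_on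
    by (simp add: central_mass_def)
  then show ?thesis using integral_interval_bounds[OF assms] by simp
qed

lemma central_mass_mono: "mono central_mass"
  using central_mass_increment by (intro monoI) force

lemma central_mass_measurable[measurable]: "central_mass \<in> borel_measurable borel"
  using central_mass_mono by (rule borel_measurable_mono)

lemma central_mass_lipschitz: "\<bar>central_mass u - central_mass v\<bar> \<le> f 0 * \<bar>u - v\<bar>"
  using central_mass_increment[of u v] central_mass_increment[of v u]
  by (cases "v \<le> u") auto

lemma central_mass_lower:
  assumes a: "a > 0"
  shows "f a * min (max s 0) a \<le> central_mass s"
proof (cases "s \<le> 0")
  case True then show ?thesis using a by (simp add: central_mass_nonpos)
next
  case False
  define r where "r = min s a"
  have r: "0 < r" "r \<le> s" "r \<le> a" using False a by (auto simp: r_def)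
  have "f a * r = integral {0..r} (\<lambda>x. f a)" using r by simp
  also have "\<dots> \<le> integral {0..r} f"
    using f_integrable_on r f_antimono by (intro integral_le) (auto simp: monotone_on_def)
  also have "\<dots> \<le> central_mass s"
    using central_mass_mono r by (auto simp: central_mass_def[symmetric] dest: monoD)
  finally show ?thesis using False by (simp add: r_def)
qed

lemma central_mass_has_derivative:
  assumes s: "0 < s" and cont: "isCont f s"
  shows "(central_mass has_real_derivative f s) (at s)"
proof -
  have "((\<lambda>u. integral {0..u} f) has_vector_derivative f s) (at s within {0..s+1} - {})"
    using s cont f_integrable_on
    by (intro integral_has_vector_derivative_continuous_at)
       (auto intro: continuous_at_imp_continuous_within)
  then have "((\<lambda>u. integral {0..u} f) has_vector_derivative f s) (at s)"
    using at_within_Icc_at[of 0 s "s+1"] s by simp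
  then show ?thesis
    unfolding has_real_derivative_iff_has_vector_derivative[symmetric]
    by (simp add: central_mass_def[abs_def])
qed

lemma integral_indicator_window:
  assumes c: "c > 0"
  shows "(LINT x|lborel. f x * indicator {x. \<bar>c * x\<bar> < t} x) = 2 * central_mass (t / c)"
proof (cases "t > 0")
  case False
  then have "{x. \<bar>c * x\<bar> < t} = {}" by auto
  then show ?thesis using False c by (simp add: central_mass_nonpos divide_nonpos_pos)
next
  case True
  define s where "s = t / c"
  have s: "s > 0" using True c by (simp add: s_def)
  have window: "{x. \<bar>c * x\<bar> < t} = {-s<..<s}"
    using c by (auto simp: s_def field_simps abs_less_iff)
  have "AE x in lborel. x \<notin> {-s, s}" by (intro AE_not_in countable_imp_null_set_lborel) auto
  then have "AE x in lborel. f x * indicator {x. \<bar>c * x\<bar> < t} x = indicator {-s..s} x * f x"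
    by eventually_elim (auto simp: window indicator_def)
  then have "(LINT x|lborel. f x * indicator {x. \<bar>c * x\<bar> < t} x) = (LINT x:{-s..s}|lborel. f x)"
    unfolding set_lebesgue_integral_def by (intro integral_cong_AE) auto
  also have "\<dots> = integral {-s..s} f"
    using f_set_integrable by (intro set_borel_integral_eq_integral(2)) auto
  also have "\<dots> = integral {-s..0} f + integral {0..s} f"
    using s f_integrable_on by (intro Henstock_Kurzweil_Integration.integral_combine[symmetric]) auto
  also have "integral {-s..0} f = integral {0..s} f"
    using Henstock_Kurzweil_Integration.integral_reflect_real[of s 0 f] f_symm by simp
  finally show ?thesis by (simp add: central_mass_def s_def)
qed

end

locale symmetric_cdf =
  fixes g G :: "real \<Rightarrow> real"
  assumes g_nonneg: "\<And>x. g x \<ge> 0"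
    and g_integrable: "integrable lborel g"
    and g_prob: "(LINT x|lborel. g x) = 1"
    and G_cdf: "\<And>x. G x = (LINT t:{..x}|lborel. g t)"
    and G_symm: "\<And>x. G (- x) = 1 - G x"
begin

lemma g_measurable[measurable]: "g \<in> borel_measurable borel"
  using g_integrable by (simp add: borel_measurable_integrable)

lemma integrable_g_indicator: "A \<in> sets borel \<Longrightarrow> integrable lborel (\<lambda>t. g t * indicator A t)"
  using g_integrable by (intro integrable_real_mult_indicator) auto

lemma G_eq_integral: "G x = (LINT t|lborel. g t * indicator {..x} t)"
  by (simp add: G_cdf set_lebesgue_integral_def mult.commute)

lemma one_minus_G_eq_integral: "1 - G x = (LINT t|lborel. g t * indicator {x<..} t)"
proof -
  have "(LINT t|lborel. g t) = (LINT t|lborel. g t * indicator {..x} t + g t * indicator {x<..} t)"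
    by (intro Bochner_Integration.integral_cong) (auto simp: indicator_def)
  also have "\<dots> = G x + (LINT t|lborel. g t * indicator {x<..} t)"
    unfolding G_eq_integral by (intro Bochner_Integration.integral_add integrable_g_indicator) auto
  finally show ?thesis using g_prob by simp
qed

lemma G_mono: "mono G"
proof (rule monoI)
  fix x y :: real assume "x \<le> y"
  then show "G x \<le> G y" unfolding G_eq_integral
    using g_nonneg by (intro integral_mono integrable_g_indicator) (auto simp: indicator_def)
qed

lemma G_measurable[measurable]: "G \<in> borel_measurable borel"
  using G_mono by (rule borel_measurable_mono)

lemma G_nonneg: "0 \<le> G x"
  unfolding G_eq_integral using g_nonneg by (intro Bochner_Integration.integral_nonneg) auto

lemma G_le_1: "G x \<le> 1"
proof -
  have "0 \<le> (LINT t|lborel. g t * indicator {x<..} t)"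
    using g_nonneg by (intro Bochner_Integration.integral_nonneg) auto
  then show ?thesis using one_minus_G_eq_integral[of x] by simp
qed

lemma G_0: "G 0 = 1/2"
  using G_symm[of 0] by simp

lemma abs_2G_minus_1: "\<bar>2 * G y - 1\<bar> = 1 - 2 * (1 - G \<bar>y\<bar>)"
proof -
  have "1/2 \<le> G \<bar>y\<bar>" using G_mono G_0 by (metis abs_ge_zero monoD)
  then show ?thesis using G_symm[of "- y"] by (cases "y \<ge> 0") simp_all
qed

lemma integral_g_positive_half: "(LINT t|lborel. g t * indicator {0<..} t) = 1/2"
  using one_minus_G_eq_integral[of 0] G_0 by simp

end

subsection \<open>The total-variation skewness of the skew-symmetric model\<close>

locale btv_setting = symmetric_unimodal_density f + symmetric_cdf g G for f g G +
  assumes g_moment: "set_integrable lborel {0..} (\<lambda>x. x * g x)"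
begin

text \<open>With independent \<open>X \<sim> f\<close> and \<open>T \<sim> g\<close>, \<open>Phi c = Pr(0 < c X < T)\<close>.\<close>
definition Phi :: "real \<Rightarrow> real" where
  "Phi c = (LINT t|lborel. g t * central_mass (t / c))"

lemma survival_integrable: "integrable lborel (\<lambda>x. f x * (1 - G \<bar>c * x\<bar>))"
  using G_nonneg G_le_1 f_nonneg
  by (intro Bochner_Integration.integrable_bound[OF f_integrable])
     (auto intro!: mult_left_le simp: abs_mult)

lemma integral_survival_eq_Phi:
  assumes c: "c > 0"
  shows "(LINT x|lborel. f x * (1 - G \<bar>c * x\<bar>)) = 2 * Phi c"
proof -
  define H where "H x t = f x * (g t * indicator {\<bar>c * x\<bar><..} t)" for x t
  have H_meas: "case_prod H \<in> borel_measurable (lborel \<Otimes>\<^sub>M lborel)"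
  proof -
    have "case_prod H = (\<lambda>z. f (fst z) * (g (snd z) * (if \<bar>c * fst z\<bar> < snd z then 1 else 0)))"
      by (auto simp: H_def indicator_def fun_eq_iff)
    also have "\<dots> \<in> borel_measurable (lborel \<Otimes>\<^sub>M lborel)" by measurable
    finally show ?thesis .
  qed
  have inner_t: "(LINT t|lborel. H x t) = f x * (1 - G \<bar>c * x\<bar>)" for x
    unfolding H_def one_minus_G_eq_integral by simp
  have inner_x: "(LINT x|lborel. H x t) = g t * (2 * central_mass (t / c))" for t
  proof -
    have "(LINT x|lborel. H x t) = (LINT x|lborel. g t * (f x * indicator {x. \<bar>c * x\<bar> < t} x))"
      by (intro Bochner_Integration.integral_cong) (auto simp: H_def indicator_def)
    then show ?thesis using integral_indicator_window[OF c, of t] by simp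
  qed
  have H_int: "integrable (lborel \<Otimes>\<^sub>M lborel) (case_prod H)"
  proof (rule lborel_pair.Fubini_integrable[OF H_meas])
    have "(\<lambda>x. LINT t|lborel. norm (H x t)) = (\<lambda>x. LINT t|lborel. H x t)"
      using f_nonneg g_nonneg
      by (intro ext Bochner_Integration.integral_cong) (auto simp: H_def abs_mult)
    then show "integrable lborel (\<lambda>x. LINT t|lborel. norm (case_prod H (x, t)))"
      using survival_integrable by (simp add: inner_t)
    show "AE x in lborel. integrable lborel (\<lambda>t. case_prod H (x, t))"
      unfolding H_def by (auto intro!: integrable_mult_right integrable_g_indicator)
  qed
  have "(LINT x|lborel. f x * (1 - G \<bar>c * x\<bar>)) = (LINT t|lborel. LINT x|lborel. H x t)"
    using lborel_pair.Fubini_integral[OF H_int] by (simp add: inner_t)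
  also have "\<dots> = 2 * Phi c"
    unfolding inner_x Phi_def
    using integral_mult_right_zero[of lborel 2 "\<lambda>t. g t * central_mass (t / c)"]
    by (simp add: mult.left_commute)
  finally show ?thesis .
qed

lemma M_TV_eq_Phi:
  assumes c: "c > 0"
  shows "M_TV f G c = 1/2 - 2 * Phi c"
proof -
  have "(LINT x|lborel. \<bar>2 * G (c * x) - 1\<bar> * f x)
      = (LINT x|lborel. f x - 2 * (f x * (1 - G \<bar>c * x\<bar>)))"
    by (intro Bochner_Integration.integral_cong) (auto simp: abs_2G_minus_1 algebra_simps)
  also have "\<dots> = 1 - 4 * Phi c"
    using f_integrable survival_integrable f_prob integral_survival_eq_Phi[OF c] by simp
  finally show ?thesis unfolding M_TV_def using c by simp
qed

definition positive_moment_density :: "real \<Rightarrow> real" where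
  "positive_moment_density t = indicator {0..} t * (t * g t)"

definition positive_mean :: real where
  "positive_mean = (LINT t|lborel. positive_moment_density t)"

lemma positive_moment_density_integrable: "integrable lborel positive_moment_density"
  using g_moment unfolding set_integrable_def positive_moment_density_def by simp

lemma positive_moment_density_nonneg: "0 \<le> positive_moment_density t"
  using g_nonneg by (auto simp: positive_moment_density_def indicator_def)

lemma Phi_integrand_bound:
  assumes c: "c > 0"
  shows "\<bar>g t * central_mass (t / c)\<bar> \<le> f 0 / c * positive_moment_density t"
proof -
  have "\<bar>g t * central_mass (t / c)\<bar> = g t * central_mass (t / c)"
    using g_nonneg central_mass_bounds by simp
  also have "\<dots> \<le> g t * (f 0 * max (t / c) 0)"
    using central_mass_bounds g_nonneg by (intro mult_left_mono) auto
  also have "\<dots> = f 0 / c * positive_moment_density t"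
    using c by (cases "t \<ge> 0") (simp_all add: positive_moment_density_def max_def field_simps)
  finally show ?thesis .
qed

lemma Phi_integrable: "c > 0 \<Longrightarrow> integrable lborel (\<lambda>t. g t * central_mass (t / c))"
  by (rule Bochner_Integration.integrable_bound[of _ "\<lambda>t. f 0 / c * positive_moment_density t"])
     (use positive_moment_density_integrable Phi_integrand_bound positive_moment_density_nonneg
        f_nonneg[of 0] in \<open>auto simp: abs_mult\<close>)

lemma Phi_nonneg: "0 \<le> Phi c"
  unfolding Phi_def using g_nonneg central_mass_bounds
  by (intro Bochner_Integration.integral_nonneg) auto

lemma Phi_upper:
  assumes c: "c > 0"
  shows "Phi c \<le> f 0 / c * positive_mean"
proof -
  have "Phi c \<le> (LINT t|lborel. f 0 / c * positive_moment_density t)"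
    unfolding Phi_def using Phi_integrand_bound[OF c] Phi_integrable[OF c]
      positive_moment_density_integrable
    by (intro integral_mono) (auto simp: abs_le_iff)
  then show ?thesis by (simp add: positive_mean_def)
qed

lemma truncated_mean_integrable:
  assumes a: "a > 0"
  shows "integrable lborel (\<lambda>t. g t * min (max t 0) a)"
proof (rule Bochner_Integration.integrable_bound[of _ "\<lambda>t. a * g t"])
  show "AE t in lborel. norm (g t * min (max t 0) a) \<le> norm (a * g t)"
  proof (rule AE_I2)
    fix t
    have "norm (g t * min (max t 0) a) = g t * min (max t 0) a" using g_nonneg[of t] a by simp
    also have "\<dots> \<le> g t * a" using g_nonneg[of t] by (intro mult_left_mono) auto
    finally show "norm (g t * min (max t 0) a) \<le> norm (a * g t)"
      using g_nonneg[of t] a by (simp add: mult.commute)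
  qed
qed (use g_integrable in auto)

lemma truncated_mean_pos:
  assumes a: "a > 0"
  shows "0 < (LINT t|lborel. g t * min (max t 0) a)"
proof -
  define m where "m t = g t * min (max t 0) a" for t
  have m_nonneg: "0 \<le> m t" for t using g_nonneg a by (simp add: m_def)
  have m_int: "integrable lborel m"
    unfolding m_def using truncated_mean_integrable[OF a] .
  have "(LINT t|lborel. m t) \<noteq> 0"
  proof
    assume "(LINT t|lborel. m t) = 0"
    then have "AE t in lborel. m t = 0"
      using integral_nonneg_eq_0_iff_AE[OF m_int] m_nonneg by simp
    then have "AE t in lborel. g t * indicator {0<..} t = 0"
      by eventually_elim (use a in \<open>auto simp: m_def indicator_def\<close>)
    then have "(LINT t|lborel. g t * indicator {0<..} t) = 0" by (rule integral_eq_zero_AE)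
    then show False using integral_g_positive_half by simp
  qed
  moreover have "0 \<le> (LINT t|lborel. m t)"
    using m_nonneg by (intro Bochner_Integration.integral_nonneg) auto
  ultimately show ?thesis by (simp add: m_def)
qed

lemma Phi_lower:
  assumes a: "a > 0" and c: "c \<ge> 1"
  shows "f a / c * (LINT t|lborel. g t * min (max t 0) a) \<le> Phi c"
proof -
  have pointwise: "f a / c * (g t * min (max t 0) a) \<le> g t * central_mass (t / c)" for t
  proof -
    have "f a / c * (g t * min (max t 0) a) = g t * (f a * (min (max t 0) a / c))" by simp
    also have "\<dots> \<le> g t * (f a * min (max (t / c) 0) a)"
      using min_max_divide_le[OF c a, of t] f_nonneg g_nonneg by (intro mult_left_mono) auto
    also have "\<dots> \<le> g t * central_mass (t / c)"
      using central_mass_lower[OF a] g_nonneg by (intro mult_left_mono) auto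
    finally show ?thesis .
  qed
  have "(LINT t|lborel. f a / c * (g t * min (max t 0) a)) \<le> Phi c"
    unfolding Phi_def using c truncated_mean_integrable[OF a]
    by (intro integral_mono pointwise Phi_integrable integrable_mult_right) auto
  then show ?thesis by simp
qed

definition Phi_deriv_integrand :: "real \<Rightarrow> real \<Rightarrow> real" where
  "Phi_deriv_integrand c t = (if t > 0 then g t * (f (t / c) * (- t / c\<^sup>2)) else 0)"

lemma Phi_deriv_integrand_measurable[measurable]:
  "Phi_deriv_integrand c \<in> borel_measurable borel"
  unfolding Phi_deriv_integrand_def[abs_def] by measurable

lemma Phi_deriv_integrand_bound:
  assumes c: "c > 0"
  shows "\<bar>Phi_deriv_integrand c t\<bar> \<le> f 0 / c\<^sup>2 * positive_moment_density t"
proof (cases "t > 0")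
  case False
  then show ?thesis
    using positive_moment_density_nonneg[of t] f_nonneg[of 0] by (simp add: Phi_deriv_integrand_def)
next
  case True
  have "\<bar>Phi_deriv_integrand c t\<bar> = g t * f (t / c) * t / c\<^sup>2"
    using True c g_nonneg f_nonneg by (simp add: Phi_deriv_integrand_def abs_mult)
  also have "\<dots> \<le> g t * f 0 * t / c\<^sup>2"
    using True g_nonneg f_le_f0 by (intro divide_right_mono mult_right_mono mult_left_mono) auto
  finally show ?thesis using True by (simp add: positive_moment_density_def mult_ac)
qed

lemma Phi_deriv_integrand_integrable: "c > 0 \<Longrightarrow> integrable lborel (Phi_deriv_integrand c)"
  by (rule Bochner_Integration.integrable_bound[of _ "\<lambda>t. f 0 / c\<^sup>2 * positive_moment_density t"])
     (use positive_moment_density_integrable Phi_deriv_integrand_bound positive_moment_density_nonneg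
        f_nonneg[of 0] in \<open>auto simp: abs_mult\<close>)

lemma Phi_deriv_integral_bound:
  assumes c: "c > 0"
  shows "\<bar>LINT t|lborel. Phi_deriv_integrand c t\<bar> \<le> f 0 / c\<^sup>2 * positive_mean"
proof -
  have "\<bar>LINT t|lborel. Phi_deriv_integrand c t\<bar> \<le> (LINT t|lborel. \<bar>Phi_deriv_integrand c t\<bar>)"
    using integral_norm_bound[of lborel "Phi_deriv_integrand c"] by simp
  also have "\<dots> \<le> (LINT t|lborel. f 0 / c\<^sup>2 * positive_moment_density t)"
    using Phi_deriv_integrand_bound[OF c] Phi_deriv_integrand_integrable[OF c]
      positive_moment_density_integrable
    by (intro integral_mono) auto
  finally show ?thesis by (simp add: positive_mean_def)
qed

lemma Phi_difference_quotient:
  assumes c: "c > 0" and h: "h > 0"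
  shows "(Phi h - Phi c) / (h - c)
    = (LINT t|lborel. g t * ((central_mass (t / h) - central_mass (t / c)) / (h - c)))"
proof -
  have "Phi h - Phi c = (LINT t|lborel. g t * (central_mass (t / h) - central_mass (t / c)))"
    unfolding Phi_def using Phi_integrable[OF h] Phi_integrable[OF c]
    by (simp add: right_diff_distrib)
  then show ?thesis by (simp flip: integral_divide_zero)
qed

lemma Phi_difference_quotient_bound:
  assumes c: "c > 0" and h: "h > c / 2"
  shows "\<bar>g t * ((central_mass (t / h) - central_mass (t / c)) / (h - c))\<bar>
    \<le> 2 * f 0 / c\<^sup>2 * positive_moment_density t"
proof (cases "t > 0 \<and> h \<noteq> c")
  case False
  moreover have "t \<le> 0 \<Longrightarrow> t / h \<le> 0 \<and> t / c \<le> 0" using c h by (simp add: divide_le_0_iff)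
  ultimately show ?thesis
    using positive_moment_density_nonneg[of t] f_nonneg[of 0] by (auto simp: central_mass_nonpos)
next
  case True
  have "t / h - t / c = t * (c - h) / (h * c)" using c h by (simp add: field_simps)
  then have "\<bar>t / h - t / c\<bar> = t * \<bar>h - c\<bar> / (h * c)"
    using True c h by (simp add: abs_mult abs_divide abs_minus_commute)
  then have "\<bar>central_mass (t / h) - central_mass (t / c)\<bar> \<le> f 0 * (t * \<bar>h - c\<bar> / (h * c))"
    using central_mass_lipschitz by metis
  then have "\<bar>(central_mass (t / h) - central_mass (t / c)) / (h - c)\<bar> \<le> f 0 * t / (h * c)"
    using True c h by (simp add: abs_divide divide_le_eq field_simps)
  also have "\<dots> \<le> 2 * f 0 * t / c\<^sup>2"
  proof -
    have "c * f 0 \<le> 2 * h * f 0" using h f_nonneg[of 0] by (intro mult_right_mono) auto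
    then show ?thesis
      using True c h by (simp add: divide_le_eq field_simps power2_eq_square mult_left_mono)
  qed
  finally have quotient: "\<bar>(central_mass (t / h) - central_mass (t / c)) / (h - c)\<bar> \<le> 2 * f 0 * t / c\<^sup>2" .
  have "\<bar>g t * ((central_mass (t / h) - central_mass (t / c)) / (h - c))\<bar>
      = g t * \<bar>(central_mass (t / h) - central_mass (t / c)) / (h - c)\<bar>"
    using g_nonneg by (simp add: abs_mult)
  also have "\<dots> \<le> g t * (2 * f 0 * t / c\<^sup>2)"
    using quotient g_nonneg by (intro mult_left_mono) auto
  also have "\<dots> = 2 * f 0 / c\<^sup>2 * positive_moment_density t"
    using True by (simp add: positive_moment_density_def)
  finally show ?thesis .
qed

lemma Phi_difference_quotient_tendsto:
  assumes c: "c > 0" and cont: "t > 0 \<Longrightarrow> isCont f (t / c)"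
  shows "((\<lambda>h. g t * ((central_mass (t / h) - central_mass (t / c)) / (h - c)))
    \<longlongrightarrow> Phi_deriv_integrand c t) (at c)"
proof (cases "t > 0")
  case False
  have "\<forall>\<^sub>F h in at c. h > 0"
    using order_tendstoD(1)[OF tendsto_ident_at[of c UNIV] c] by simp
  then have "\<forall>\<^sub>F h in at c. g t * ((central_mass (t / h) - central_mass (t / c)) / (h - c)) = 0"
    by eventually_elim (use False c in \<open>simp add: central_mass_nonpos divide_le_0_iff\<close>)
  then show ?thesis using False by (simp add: Phi_deriv_integrand_def tendsto_eventually)
next
  case True
  have "(central_mass has_real_derivative f (t / c)) (at (t / c))"
    using central_mass_has_derivative cont True c by simp
  moreover have "((\<lambda>h. t / h) has_real_derivative (- t / c\<^sup>2)) (at c)"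
    using c by (auto intro!: derivative_eq_intros simp: power2_eq_square field_simps)
  ultimately have "((\<lambda>h. central_mass (t / h)) has_real_derivative f (t / c) * (- t / c\<^sup>2)) (at c)"
    by (rule DERIV_chain2)
  then have "((\<lambda>h. (central_mass (t / h) - central_mass (t / c)) / (h - c))
      \<longlongrightarrow> f (t / c) * (- t / c\<^sup>2)) (at c)"
    by (simp add: has_field_derivative_iff)
  then have "((\<lambda>h. g t * ((central_mass (t / h) - central_mass (t / c)) / (h - c)))
      \<longlongrightarrow> g t * (f (t / c) * (- t / c\<^sup>2))) (at c)"
    by (rule tendsto_mult_left)
  then show ?thesis using True by (simp add: Phi_deriv_integrand_def)
qed

lemma Phi_has_derivative:
  assumes c: "c > 0"
  shows "(Phi has_real_derivative (LINT t|lborel. Phi_deriv_integrand c t)) (at c)"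
proof -
  define s where "s h t = g t * ((central_mass (t / h) - central_mass (t / c)) / (h - c))" for h t
  have near: "\<forall>\<^sub>F h in at c. h > c / 2"
    using order_tendstoD(1)[OF tendsto_ident_at[of c UNIV], of "c / 2"] c by simp
  define N where "N = (\<lambda>x. c * x) ` {s\<in>{0<..}. \<not> isCont f s}"
  have "countable N" unfolding N_def using countable_discontinuities by auto
  then have "AE t in lborel. t \<notin> N" by (intro AE_not_in countable_imp_null_set_lborel)
  then have "AE t in lborel. ((\<lambda>h. s h t) \<longlongrightarrow> Phi_deriv_integrand c t) (at c)"
  proof eventually_elim
    fix t assume "t \<notin> N"
    moreover have "t = c * (t / c)" using c by simp
    ultimately have "t > 0 \<Longrightarrow> isCont f (t / c)"
      using c unfolding N_def by (auto simp del: times_divide_eq_right)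
    then show "((\<lambda>h. s h t) \<longlongrightarrow> Phi_deriv_integrand c t) (at c)"
      unfolding s_def by (rule Phi_difference_quotient_tendsto[OF c])
  qed
  moreover have "\<forall>\<^sub>F h in at c. AE t in lborel. norm (s h t) \<le> 2 * f 0 / c\<^sup>2 * positive_moment_density t"
    using near by eventually_elim (use Phi_difference_quotient_bound[OF c] in \<open>simp add: s_def\<close>)
  ultimately have "((\<lambda>h. LINT t|lborel. s h t) \<longlongrightarrow> (LINT t|lborel. Phi_deriv_integrand c t)) (at c)"
    using positive_moment_density_integrable
    by (intro integral_dominated_convergence_at) (auto simp: s_def)
  moreover have "\<forall>\<^sub>F h in at c. (Phi h - Phi c) / (h - c) = (LINT t|lborel. s h t)"
    using near by eventually_elim (use c in \<open>simp add: s_def Phi_difference_quotient\<close>)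
  ultimately show ?thesis
    unfolding has_field_derivative_iff by (simp add: tendsto_cong)
qed

lemma deriv_M_TV:
  assumes c: "c > 0"
  shows "deriv (M_TV f G) c = - 2 * (LINT t|lborel. Phi_deriv_integrand c t)"
proof -
  have "((\<lambda>x. 1/2 - 2 * Phi x) has_real_derivative (- 2 * (LINT t|lborel. Phi_deriv_integrand c t))) (at c)"
    using Phi_has_derivative[OF c] by (auto intro!: derivative_eq_intros)
  then have "(M_TV f G has_real_derivative (- 2 * (LINT t|lborel. Phi_deriv_integrand c t))) (at c)"
    by (rule has_field_derivative_transform_within_open[of _ _ _ "{0<..}"])
       (use c M_TV_eq_Phi in auto)
  then show ?thesis by (rule DERIV_imp_deriv)
qed

lemma M_TV_right_estimates:
  obtains L U where "0 < L"
    and "\<And>c. c \<ge> 1 \<Longrightarrow> L / c \<le> 1/2 - M_TV f G c \<and> 1/2 - M_TV f G c \<le> U / c"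
    and "\<And>c. c \<ge> 1 \<Longrightarrow> 0 \<le> M_TV f G c \<and> M_TV f G c \<le> 1/2"
    and "\<And>c. c \<ge> 1 \<Longrightarrow> \<bar>deriv (M_TV f G) c\<bar> \<le> U / c\<^sup>2"
proof -
  obtain a where a: "a > 0" "f a > 0" using f_pos_somewhere by auto
  define L where "L = 2 * f a * (LINT t|lborel. g t * min (max t 0) a)"
  define U where "U = 2 * f 0 * positive_mean"
  show thesis
  proof (rule that[of L U])
    show "0 < L" using a truncated_mean_pos[OF a(1)] by (simp add: L_def)
    fix c :: real assume c: "c \<ge> 1"
    then have "0 \<le> M_TV f G c"
      unfolding M_TV_def using f_nonneg by (auto intro!: Bochner_Integration.integral_nonneg)
    then show "0 \<le> M_TV f G c \<and> M_TV f G c \<le> 1/2"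
      using Phi_nonneg[of c] M_TV_eq_Phi[of c] c by simp
    show "L / c \<le> 1/2 - M_TV f G c \<and> 1/2 - M_TV f G c \<le> U / c"
      using Phi_lower[OF a(1) c] Phi_upper[of c] M_TV_eq_Phi[of c] c by (simp add: L_def U_def)
    show "\<bar>deriv (M_TV f G) c\<bar> \<le> U / c\<^sup>2"
      using Phi_deriv_integral_bound[of c] deriv_M_TV[of c] c
      by (simp add: U_def abs_mult)
  qed
qed

theorem pi_TV_right_tail: "pi_TV f G a b \<in> O[at_top](\<lambda>c. \<bar>c\<bar> powr (- b - 1))"
proof -
  obtain L U where L: "0 < L"
    and gap: "\<And>c. c \<ge> 1 \<Longrightarrow> L / c \<le> 1/2 - M_TV f G c \<and> 1/2 - M_TV f G c \<le> U / c"
    and range: "\<And>c. c \<ge> 1 \<Longrightarrow> 0 \<le> M_TV f G c \<and> M_TV f G c \<le> 1/2"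
    and slope: "\<And>c. c \<ge> 1 \<Longrightarrow> \<bar>deriv (M_TV f G) c\<bar> \<le> U / c\<^sup>2"
    using M_TV_right_estimates by blast
  define C where "C = \<bar>1 / Beta a b\<bar> * (1 + (1/2) powr (a - 1))
    * (L powr (b - 1) + U powr (b - 1)) * U"
  have "norm (pi_TV f G a b c) \<le> C * norm (\<bar>c\<bar> powr (- b - 1))" if c: "c \<ge> 1" for c
  proof -
    have "norm (pi_TV f G a b c) = \<bar>1 / Beta a b\<bar> * (M_TV f G c + 1/2) powr (a - 1)
        * (1/2 - M_TV f G c) powr (b - 1) * \<bar>deriv (M_TV f G) c\<bar>"
      unfolding pi_TV_def by (simp add: abs_mult)
    also have "\<dots> \<le> \<bar>1 / Beta a b\<bar> * (1 + (1/2) powr (a - 1))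
        * ((L powr (b - 1) + U powr (b - 1)) * c powr (- (b - 1))) * (U / c\<^sup>2)"
    proof (intro mult_mono mult_left_mono)
      show "(M_TV f G c + 1/2) powr (a - 1) \<le> 1 + (1/2) powr (a - 1)"
        using range[OF c] by (intro powr_le_one_plus_half_powr) auto
      show "(1/2 - M_TV f G c) powr (b - 1) \<le> (L powr (b - 1) + U powr (b - 1)) * c powr (- (b - 1))"
        using gap[OF c] c by (intro powr_le_of_inverse_bounds[OF L]) auto
    qed (use slope[OF c] in auto)
    also have "\<dots> = C * (c powr (- (b - 1)) / c powr 2)"
      using c by (simp add: C_def)
    also have "\<dots> = C * c powr (- (b - 1) - 2)"
      by (simp only: powr_diff)
    also have "- (b - 1) - 2 = - b - 1" by simp
    finally show ?thesis using c by simp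
  qed
  then have "\<forall>\<^sub>F c in at_top. norm (pi_TV f G a b c) \<le> C * norm (\<bar>c\<bar> powr (- b - 1))"
    unfolding eventually_at_top_linorder by blast
  then show ?thesis by (rule bigoI)
qed

end

theorem corollary1:
  fixes f g G :: "real \<Rightarrow> real" and M \<alpha> \<beta> :: real
  assumes f_nonneg: "\<And>x. f x \<ge> 0"
    and f_int: "integrable lborel f"
    and f_prob: "(LINT x|lborel. f x) = 1"
    and f_symm: "\<And>x. f (- x) = f x"
    and f_unimodal: "antimono_on {0..} f" "mono_on {..0} f"
    and f_M: "f 0 = M"
    and f_moment: "set_integrable lborel {0..} (\<lambda>x. x * f x)"
    and g_nonneg: "\<And>x. g x \<ge> 0"
    and g_int: "integrable lborel g"
    and g_prob: "(LINT x|lborel. g x) = 1"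
    and G_cdf: "\<And>x. G x = (LINT t:{..x}|lborel. g t)"
    and G_symm: "\<And>x. G (- x) = 1 - G x"
    and g_bdd: "\<exists>B. \<forall>x. g x \<le> B"
    and g_moment: "set_integrable lborel {0..} (\<lambda>x. x * g x)"
    and \<alpha>_pos: "\<alpha> > 0" and \<beta>_pos: "\<beta> > 0"
  shows "pi_TV f G \<alpha> \<beta> \<in> O[at_top](\<lambda>lam. \<bar>lam\<bar> powr (- \<beta> - 1))
    \<and> pi_TV f G \<alpha> \<beta> \<in> O[at_bot](\<lambda>lam. \<bar>lam\<bar> powr (- \<alpha> - 1))
    \<and> (\<alpha> = \<beta> \<longrightarrow> (\<forall>lam. pi_TV f G \<alpha> \<beta> (- lam) = pi_TV f G \<alpha> \<beta> lam))"
proof -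
  interpret btv_setting f g G
    by unfold_locales (fact f_nonneg f_int f_prob f_symm f_unimodal g_nonneg g_int g_prob
      G_cdf G_symm g_moment)+
  have reflect: "pi_TV f G a b (- c) = pi_TV f G b a c" for a b c
    using pi_TV_minus G_symm .
  have "pi_TV f G \<alpha> \<beta> \<in> O[at_bot](\<lambda>lam. \<bar>lam\<bar> powr (- \<alpha> - 1))"
    unfolding at_bot_mirror landau_o.big.in_filtermap_iff reflect
    using pi_TV_right_tail[of \<beta> \<alpha>] by simp
  then show ?thesis
    using pi_TV_right_tail[of \<alpha> \<beta>] reflect[of \<alpha> \<alpha>] by auto
qed

end
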